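(* Let $G$ be a topological group which is a Baire space. Then the following are equivalent: (i) $G$ is metrizable; (ii) $G$ has the strong Pytkeev property; (iii) $G$ has countable $ck$-character; (iv) $G$ has countable $cn$-character; (v) $G$ has a $\mathfrak{G}$-base satisfying the condition $(\mathbf{D})$.
   Context: A space $X$ has the strong Pytkeev property if for each $x\in X$ there is a countable family $\mathcal{D}$ of subsets of $X$ such that for each neighborhood $U$ of $x$ and each $A\subseteq X$ with $x\in\overline{A}\setminus A$ there is $D\in\mathcal{D}$ with $D\subseteq U$ and $D\cap A$ infinite. For $x\in X$, a family $\mathcal{N}$ of subsets of $X$ is a $cn$-network at $x$ if for each neighborhood $O_x$ of $x$ the set $\bigcup\{N\in\mathcal{N}:x\in N\subseteq O_x\}$ is a neighborhood of $x$; it is a $ck$-network at $x$ if for every neighborhood $O_x$ there is a neighborhood $U_x$ of $x$ such that for each compact $K\subseteq U_x$ there is a finite $\mathcal{F}\subseteq\mathcal{N}$ with $x\in\bigcap\mathcal{F}$ and $K\subseteq\bigcup\mathcal{F}\subseteq O_x$. The $cn$-character (resp. $ck$-character) of $X$ is the supremum over $x\in X$ of the least cardinality of a $cn$-network (resp. $ck$-network) at $x$. $\mathbb{N}^\mathbb{N}$ is ordered coordinatewise. A $\mathfrak{G}$-base of a topological group $G$ is a base $\{U_\alpha:\alpha\in\mathbb{N}^\mathbb{N}\}$ of neighborhoods of the unit $e$ with $U_\beta\subseteq U_\alpha$ whenever $\alpha\le\beta$. For $\alpha\in\mathbb{N}^\mathbb{N}$, $k\in\mathbb{N}$, let $I_k(\alpha)=\{\beta:\beta_i=\alpha_i,\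 i=1,\dots,k\}$ and $D_k(\alpha)=\bigcap_{\beta\in I_k(\alpha)}U_\beta$; the base satisfies condition $(\mathbf{D})$ if $U_\alpha=\bigcup_k D_k(\alpha)$ for every $\alpha$. *)

theory Defs
  imports "HOL-Analysis.Analysis"
begin

definition nhd_of :: "'a::topological_space \<Rightarrow> 'a set \<Rightarrow> bool" where
  "nhd_of x S \<longleftrightarrow> (\<exists>V. open V \<and> x \<in> V \<and> V \<subseteq> S)"

definition Baire_space :: "'a::topological_space itself \<Rightarrow> bool" where
  "Baire_space _ \<longleftrightarrow>
     (\<forall>\<G> :: 'a set set. countable \<G> \<and> (\<forall>G\<in>\<G>. open G \<and> closure G = UNIV)
        \<longrightarrow> closure (\<Inter>\<G>) = UNIV)"

definition strong_Pytkeev :: "'a::topological_space itself \<Rightarrow> bool" where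
  "strong_Pytkeev _ \<longleftrightarrow>
     (\<forall>x::'a. \<exists>\<D> :: 'a set set. countable \<D> \<and>
        (\<forall>U A. nhd_of x U \<and> x \<in> closure A - A \<longrightarrow>
           (\<exists>D\<in>\<D>. D \<subseteq> U \<and> infinite (D \<inter> A))))"

definition cn_network_at :: "'a::topological_space \<Rightarrow> 'a set set \<Rightarrow> bool" where
  "cn_network_at x \<N> \<longleftrightarrow>
     (\<forall>W. nhd_of x W \<longrightarrow> nhd_of x (\<Union>{N\<in>\<N>. x \<in> N \<and> N \<subseteq> W}))"

definition ck_network_at :: "'a::topological_space \<Rightarrow> 'a set set \<Rightarrow> bool" where
  "ck_network_at x \<N> \<longleftrightarrow>
     (\<forall>W. nhd_of x W \<longrightarrow> (\<exists>U. nhd_of x U \<and>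
        (\<forall>K. compact K \<and> K \<subseteq> U \<longrightarrow>
           (\<exists>\<F>. finite \<F> \<and> \<F> \<subseteq> \<N> \<and> x \<in> \<Inter>\<F> \<and> K \<subseteq> \<Union>\<F> \<and> \<Union>\<F> \<subseteq> W))))"

definition countable_cn_character :: "'a::topological_space itself \<Rightarrow> bool" where
  "countable_cn_character _ \<longleftrightarrow> (\<forall>x::'a. \<exists>\<N>. countable \<N> \<and> cn_network_at x \<N>)"

definition countable_ck_character :: "'a::topological_space itself \<Rightarrow> bool" where
  "countable_ck_character _ \<longleftrightarrow> (\<forall>x::'a. \<exists>\<N>. countable \<N> \<and> ck_network_at x \<N>)"

text \<open>G-base (indexed by N^N with the pointwise order; coordinates indexed from 0)
  of neighborhoods of the unit 0 of an (additively written) topological group.\<close>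
definition G_base :: "((nat \<Rightarrow> nat) \<Rightarrow> 'a::topological_group_add set) \<Rightarrow> bool" where
  "G_base U \<longleftrightarrow>
     (\<forall>\<alpha>. nhd_of 0 (U \<alpha>)) \<and>
     (\<forall>V. nhd_of 0 V \<longrightarrow> (\<exists>\<alpha>. U \<alpha> \<subseteq> V)) \<and>
     (\<forall>\<alpha> \<beta>. \<alpha> \<le> \<beta> \<longrightarrow> U \<beta> \<subseteq> U \<alpha>)"

definition I_k :: "nat \<Rightarrow> (nat \<Rightarrow> nat) \<Rightarrow> (nat \<Rightarrow> nat) set" where
  "I_k k \<alpha> = {\<beta>. \<forall>i<k. \<beta> i = \<alpha> i}"

definition D_k :: "((nat \<Rightarrow> nat) \<Rightarrow> 'a set) \<Rightarrow> nat \<Rightarrow> (nat \<Rightarrow> nat) \<Rightarrow> 'a set" where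
  "D_k U k \<alpha> = (\<Inter>\<beta>\<in>I_k k \<alpha>. U \<beta>)"

definition condition_D :: "((nat \<Rightarrow> nat) \<Rightarrow> 'a set) \<Rightarrow> bool" where
  "condition_D U \<longleftrightarrow> (\<forall>\<alpha>. U \<alpha> = (\<Union>k. D_k U k \<alpha>))"

end

theory Submission
  imports Defs
begin

text \<open>All five conditions are equivalent to the existence of a countable neighbourhood base
  at \<open>0\<close>. Such a base translates to every point, and a countable base at each point is
  trivially a \<open>cn\<close>- and a \<open>ck\<close>-network, witnesses the strong Pytkeev property and yields
  a \<open>\<GG>\<close>-base with \<open>(D)\<close>. Conversely, each of the four conditions provides a countable
  family \<open>\<C>\<close> such that every neighbourhood \<open>W\<close> of \<open>0\<close> contains a member of \<open>\<C>\<close> whose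
  closure has interior: for networks and for \<open>(D)\<close> because the members inside \<open>W\<close> cover a
  neighbourhood of \<open>0\<close>, so the Baire property applies; for the strong Pytkeev property
  because otherwise the points outside all these nowhere dense members accumulate at \<open>0\<close>
  without meeting any of them. In a group, translating the interiors of these closures
  back to \<open>0\<close> gives a countable base at \<open>0\<close>. Finally a first countable \<open>T\<^sub>1\<close> group is
  metrizable by the Birkhoff--Kakutani theorem: from neighbourhoods \<open>V\<^sub>n\<close> of \<open>0\<close> with
  \<open>V\<^sub>n\<^sub>+\<^sub>1 + V\<^sub>n\<^sub>+\<^sub>1 + V\<^sub>n\<^sub>+\<^sub>1 \<subseteq> V\<^sub>n\<close> one builds a left-invariant metric.\<close>

section \<open>Neighbourhoods of zero in topological groups\<close>

lemma nhd_ofI: "open V \<Longrightarrow> x \<in> V \<Longrightarrow> nhd_of x V"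
  unfolding nhd_of_def by blast

lemma nhd_of_mono: "nhd_of x S \<Longrightarrow> S \<subseteq> T \<Longrightarrow> nhd_of x T"
  unfolding nhd_of_def by blast

lemma open_translation_group:
  fixes S :: "'a::topological_group_add set"
  assumes "open S"
  shows "open ((+) a ` S)"
proof -
  have "(+) a ` S = (\<lambda>x. -a + x) -` S"
    by (auto simp: image_iff add.assoc[symmetric]) (metis add_minus_cancel)
  moreover have "continuous_on UNIV (\<lambda>x::'a. -a + x)"
    by (intro continuous_intros)
  ultimately show ?thesis
    using open_vimage[OF assms] by metis
qed

lemma open_negation_group:
  fixes S :: "'a::topological_group_add set"
  assumes "open S"
  shows "open (uminus ` S)"
proof -
  have "uminus ` S = uminus -` S"
    by (auto simp: image_iff) (metis minus_minus)
  moreover have "continuous_on UNIV (\<lambda>x::'a. -x)"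
    by (intro continuous_intros)
  ultimately show ?thesis
    using open_vimage[OF assms] by metis
qed

lemma nhds_0_sum2:
  fixes W :: "'a::topological_group_add set"
  assumes "open W" "0 \<in> W"
  obtains V where "open V" "0 \<in> V" "\<And>x y. x \<in> V \<Longrightarrow> y \<in> V \<Longrightarrow> x + y \<in> W"
proof -
  have "eventually (\<lambda>p. fst p + snd p \<in> W) (nhds (0::'a) \<times>\<^sub>F nhds 0)"
    using topological_tendstoD[OF tendsto_add_Pair[of "0::'a" 0]] assms by simp
  then obtain Q where "eventually Q (nhds (0::'a))" and Q: "\<And>x y. Q x \<Longrightarrow> Q y \<Longrightarrow> x + y \<in> W"
    unfolding eventually_prod_same by auto
  then obtain V where "open V" "0 \<in> V" "\<forall>x\<in>V. Q x"
    unfolding eventually_nhds by blast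
  then show thesis
    using that Q by blast
qed

lemma symmetric_nhds_0_sum4:
  fixes W :: "'a::topological_group_add set"
  assumes "open W" "0 \<in> W"
  obtains V where "open V" "0 \<in> V" "\<And>x. x \<in> V \<Longrightarrow> -x \<in> V"
    "\<And>a b c d. a \<in> V \<Longrightarrow> b \<in> V \<Longrightarrow> c \<in> V \<Longrightarrow> d \<in> V \<Longrightarrow> a + b + c + d \<in> W"
proof -
  obtain V1 where V1: "open V1" "0 \<in> V1" "\<And>x y. x \<in> V1 \<Longrightarrow> y \<in> V1 \<Longrightarrow> x + y \<in> W"
    using nhds_0_sum2[OF assms] by blast
  obtain V2 where V2: "open V2" "0 \<in> V2" "\<And>x y. x \<in> V2 \<Longrightarrow> y \<in> V2 \<Longrightarrow> x + y \<in> V1"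
    using nhds_0_sum2[OF V1(1,2)] by blast
  show thesis
  proof
    show "open (V2 \<inter> uminus ` V2)"
      using V2(1) open_negation_group by blast
    show "0 \<in> V2 \<inter> uminus ` V2"
      using V2(2) by force
    show "-x \<in> V2 \<inter> uminus ` V2" if "x \<in> V2 \<inter> uminus ` V2" for x
      using that by force
    fix a b c d
    assume "a \<in> V2 \<inter> uminus ` V2" "b \<in> V2 \<inter> uminus ` V2"
      "c \<in> V2 \<inter> uminus ` V2" "d \<in> V2 \<inter> uminus ` V2"
    then have "(a + b) + (c + d) \<in> W"
      using V1(3) V2(3) by blast
    then show "a + b + c + d \<in> W"
      by (simp add: add.assoc)
  qed
qed

lemma closure_nhd_0_subset_sum:
  fixes V :: "'a::topological_group_add set"
  assumes "open V" "0 \<in> V" "x \<in> closure V"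
  obtains a b where "a \<in> V" "b \<in> V" "x = a + b"
proof -
  have "open ((+) x ` uminus ` V)"
    by (intro open_translation_group open_negation_group assms(1))
  moreover have "x \<in> (+) x ` uminus ` V"
    using assms(2) by force
  ultimately have "(+) x ` uminus ` V \<inter> V \<noteq> {}"
    using assms(3) open_Int_closure_eq_empty[of "(+) x ` uminus ` V" V] by blast
  then obtain v where v: "v \<in> V" "x + - v \<in> V"
    by auto
  have "x = (x + - v) + v"
    by (simp add: add.assoc)
  with v show thesis
    using that by blast
qed

lemma nhds_0_closure_differences:
  fixes W :: "'a::topological_group_add set"
  assumes "open W" "0 \<in> W"
  obtains V where "open V" "0 \<in> V" "\<And>p q. p \<in> closure V \<Longrightarrow> q \<in> closure V \<Longrightarrow> -p + q \<in> W"
proof -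
  obtain V where V: "open V" "0 \<in> V" "\<And>x. x \<in> V \<Longrightarrow> -x \<in> V"
    "\<And>a b c d. a \<in> V \<Longrightarrow> b \<in> V \<Longrightarrow> c \<in> V \<Longrightarrow> d \<in> V \<Longrightarrow> a + b + c + d \<in> W"
    using symmetric_nhds_0_sum4[OF assms] by blast
  have differences: "-p + q \<in> W" if p: "p \<in> closure V" and q: "q \<in> closure V" for p q
  proof -
    obtain v1 v2 where v12: "v1 \<in> V" "v2 \<in> V" "p = v1 + v2"
      using closure_nhd_0_subset_sum[OF V(1,2) p] .
    obtain v3 v4 where v34: "v3 \<in> V" "v4 \<in> V" "q = v3 + v4"
      using closure_nhd_0_subset_sum[OF V(1,2) q] .
    have "-p + q = - v2 + - v1 + v3 + v4"
      using v12(3) v34(3) by (simp add: minus_add add.assoc)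
    moreover have "- v2 + - v1 + v3 + v4 \<in> W"
      using V(3,4) v12(1,2) v34(1,2) by blast
    ultimately show ?thesis
      by simp
  qed
  show thesis
    by (rule that[OF V(1,2) differences])
qed

section \<open>Countable neighbourhood bases\<close>

definition countable_nhds_base_at :: "'a::topological_space \<Rightarrow> bool" where
  "countable_nhds_base_at x \<longleftrightarrow>
     (\<exists>A :: nat \<Rightarrow> 'a set. (\<forall>n. open (A n) \<and> x \<in> A n) \<and> (\<forall>W. nhd_of x W \<longrightarrow> (\<exists>n. A n \<subseteq> W)))"

lemma countable_nhds_base_atI:
  assumes "countable B" "\<And>b. b \<in> B \<Longrightarrow> open b \<and> x \<in> b" "\<And>W. nhd_of x W \<Longrightarrow> \<exists>b\<in>B. b \<subseteq> W"
  shows "countable_nhds_base_at x"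
proof -
  have "B \<noteq> {}"
    using assms(3)[OF nhd_ofI[of UNIV x]] by auto
  then have "range (from_nat_into B) = B"
    using assms(1) by simp
  then show ?thesis
    unfolding countable_nhds_base_at_def using assms(2,3)
    by (intro exI[of _ "from_nat_into B"]) (metis rangeI image_iff)
qed

lemma countable_nhds_base_at_decseqE:
  fixes x :: "'a::topological_space"
  assumes "countable_nhds_base_at x"
  obtains A :: "nat \<Rightarrow> 'a set"
  where "\<And>n. open (A n)" "\<And>n. x \<in> A n" "decseq A" "\<And>W. nhd_of x W \<Longrightarrow> \<exists>n. A n \<subseteq> W"
proof -
  obtain A :: "nat \<Rightarrow> 'a set" where A: "\<And>n. open (A n) \<and> x \<in> A n" "\<And>W. nhd_of x W \<Longrightarrow> \<exists>n. A n \<subseteq> W"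
    using assms unfolding countable_nhds_base_at_def by blast
  show thesis
  proof
    show "open (\<Inter>(A ` {..n}))" "x \<in> \<Inter>(A ` {..n})" for n
      using A(1) by auto
    show "decseq (\<lambda>n. \<Inter>(A ` {..n}))"
      by (auto simp: decseq_def)
    show "\<exists>n. \<Inter>(A ` {..n}) \<subseteq> W" if W: "nhd_of x W" for W
    proof -
      obtain n where "A n \<subseteq> W"
        using A(2)[OF W] by blast
      moreover have "\<Inter>(A ` {..n}) \<subseteq> A n"
        by (simp add: INF_lower)
      ultimately show ?thesis
        by blast
    qed
  qed
qed

lemma countable_nhds_base_at_translation:
  fixes x :: "'a::topological_group_add"
  assumes "countable_nhds_base_at (0::'a)"
  shows "countable_nhds_base_at x"
proof -
  obtain A :: "nat \<Rightarrow> 'a set" where A: "\<And>n. open (A n) \<and> 0 \<in> A n" "\<And>W. nhd_of 0 W \<Longrightarrow> \<exists>n. A n \<subseteq> W"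
    using assms unfolding countable_nhds_base_at_def by blast
  have "\<exists>n. (+) x ` A n \<subseteq> W" if W: "nhd_of x W" for W
  proof -
    obtain V where V: "open V" "x \<in> V" "V \<subseteq> W"
      using W unfolding nhd_of_def by blast
    have "-x + x \<in> (+) (-x) ` V"
      using V(2) by (rule imageI)
    then have "nhd_of 0 ((+) (-x) ` V)"
      using V(1) by (intro nhd_ofI open_translation_group) simp_all
    then obtain n where "A n \<subseteq> (+) (-x) ` V"
      using A(2) by blast
    then have "(+) x ` A n \<subseteq> (+) x ` (+) (-x) ` V"
      by (rule image_mono)
    also have "\<dots> = V"
      by (simp add: image_image add.assoc[symmetric])
    finally show ?thesis
      using V(3) by blast
  qed
  moreover have "open ((+) x ` A n) \<and> x \<in> (+) x ` A n" for n
  proof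
    show "open ((+) x ` A n)"
      using A(1) by (simp add: open_translation_group)
    have "x + 0 \<in> (+) x ` A n"
      using A(1) by (intro imageI) simp
    then show "x \<in> (+) x ` A n"
      by simp
  qed
  ultimately show ?thesis
    unfolding countable_nhds_base_at_def by (intro exI[of _ "\<lambda>n. (+) x ` A n"]) blast
qed

lemma countable_nhds_base_at_if_metrizable:
  assumes "metrizable_space (euclidean :: 'a::topological_space topology)"
  shows "countable_nhds_base_at (x::'a)"
proof -
  have "first_countable (euclidean :: 'a topology)"
    using assms by (rule metrizable_imp_first_countable)
  then have "\<exists>\<B>. countable \<B> \<and> (\<forall>V\<in>\<B>. openin euclidean V) \<and>
      (\<forall>U. openin euclidean U \<and> x \<in> U \<longrightarrow> (\<exists>V\<in>\<B>. x \<in> V \<and> V \<subseteq> U))"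
    unfolding first_countable_def by simp
  then obtain \<B> :: "'a set set" where \<B>: "countable \<B>" "\<forall>V\<in>\<B>. open V"
    "\<forall>U. open U \<and> x \<in> U \<longrightarrow> (\<exists>V\<in>\<B>. x \<in> V \<and> V \<subseteq> U)"
    by auto
  show ?thesis
  proof (rule countable_nhds_base_atI[of "{V \<in> \<B>. x \<in> V}"])
    show "countable {V \<in> \<B>. x \<in> V}"
      using \<B>(1) by simp
    show "open V \<and> x \<in> V" if "V \<in> {V \<in> \<B>. x \<in> V}" for V
      using that \<B>(2) by blast
    show "\<exists>V\<in>{V \<in> \<B>. x \<in> V}. V \<subseteq> W" if W: "nhd_of x W" for W
    proof -
      obtain U where "open U" "x \<in> U" "U \<subseteq> W"
        using W unfolding nhd_of_def by blast
      then obtain V where "V \<in> \<B>" "x \<in> V" "V \<subseteq> U"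
        using \<B>(3) by blast
      then show ?thesis
        using \<open>U \<subseteq> W\<close> by blast
    qed
  qed
qed

lemma countable_cn_character_if_countable_nhds_bases:
  assumes "\<And>x::'a::topological_space. countable_nhds_base_at x"
  shows "countable_cn_character TYPE('a)"
  unfolding countable_cn_character_def
proof
  fix x :: 'a
  obtain A :: "nat \<Rightarrow> 'a set" where A: "\<And>n. open (A n) \<and> x \<in> A n" "\<And>W. nhd_of x W \<Longrightarrow> \<exists>n. A n \<subseteq> W"
    using assms unfolding countable_nhds_base_at_def by blast
  have "cn_network_at x (range A)"
    unfolding cn_network_at_def
  proof (intro allI impI)
    fix W assume "nhd_of x W"
    then obtain n where "A n \<subseteq> W"
      using A(2) by blast
    then have "A n \<subseteq> \<Union>{N \<in> range A. x \<in> N \<and> N \<subseteq> W}"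
      using A(1) by blast
    moreover have "nhd_of x (A n)"
      using A(1) by (simp add: nhd_ofI)
    ultimately show "nhd_of x (\<Union>{N \<in> range A. x \<in> N \<and> N \<subseteq> W})"
      by (rule nhd_of_mono[rotated])
  qed
  moreover have "countable (range A)"
    by simp
  ultimately show "\<exists>\<N>. countable \<N> \<and> cn_network_at x \<N>"
    by blast
qed

lemma countable_ck_character_if_countable_nhds_bases:
  assumes "\<And>x::'a::topological_space. countable_nhds_base_at x"
  shows "countable_ck_character TYPE('a)"
  unfolding countable_ck_character_def
proof
  fix x :: 'a
  obtain A :: "nat \<Rightarrow> 'a set" where A: "\<And>n. open (A n) \<and> x \<in> A n" "\<And>W. nhd_of x W \<Longrightarrow> \<exists>n. A n \<subseteq> W"
    using assms unfolding countable_nhds_base_at_def by blast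
  have "ck_network_at x (range A)"
    unfolding ck_network_at_def
  proof (intro allI impI)
    fix W assume "nhd_of x W"
    then obtain n where n: "A n \<subseteq> W"
      using A(2) by blast
    have "finite {A n} \<and> {A n} \<subseteq> range A \<and> x \<in> \<Inter>{A n} \<and> K \<subseteq> \<Union>{A n} \<and> \<Union>{A n} \<subseteq> W"
      if "K \<subseteq> A n" for K
      using that n A(1) by simp
    moreover have "nhd_of x (A n)"
      using A(1) nhd_ofI by blast
    ultimately show "\<exists>U. nhd_of x U \<and> (\<forall>K. compact K \<and> K \<subseteq> U \<longrightarrow>
        (\<exists>\<F>. finite \<F> \<and> \<F> \<subseteq> range A \<and> x \<in> \<Inter>\<F> \<and> K \<subseteq> \<Union>\<F> \<and> \<Union>\<F> \<subseteq> W))"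
      by (intro exI[of _ "A n"] conjI allI impI exI[of _ "{A n}"]) auto
  qed
  moreover have "countable (range A)"
    by simp
  ultimately show "\<exists>\<N>. countable \<N> \<and> ck_network_at x \<N>"
    by blast
qed

lemma strong_Pytkeev_if_countable_nhds_bases:
  assumes "\<And>x::'a::t1_space. countable_nhds_base_at x"
  shows "strong_Pytkeev TYPE('a)"
  unfolding strong_Pytkeev_def
proof
  fix x :: 'a
  obtain A :: "nat \<Rightarrow> 'a set" where A: "\<And>n. open (A n) \<and> x \<in> A n" "\<And>W. nhd_of x W \<Longrightarrow> \<exists>n. A n \<subseteq> W"
    using assms unfolding countable_nhds_base_at_def by blast
  have "\<exists>D\<in>range A. D \<subseteq> U \<and> infinite (D \<inter> S)"
    if U: "nhd_of x U" and S: "x \<in> closure S - S" for U S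
  proof -
    obtain n where n: "A n \<subseteq> U"
      using A(2)[OF U] by blast
    have "infinite (A n \<inter> S)"
    proof
      assume "finite (A n \<inter> S)"
      then have "open (A n - (A n \<inter> S))"
        using A(1) by (simp add: open_Diff finite_imp_closed)
      moreover have "x \<in> A n - (A n \<inter> S)" "(A n - (A n \<inter> S)) \<inter> S = {}"
        using A(1) S by auto
      ultimately show False
        using S open_Int_closure_eq_empty[of "A n - (A n \<inter> S)" S] by blast
    qed
    then show ?thesis
      using n by blast
  qed
  moreover have "countable (range A)"
    by simp
  ultimately show "\<exists>\<D>. countable \<D> \<and> (\<forall>U S. nhd_of x U \<and> x \<in> closure S - S \<longrightarrow>
      (\<exists>D\<in>\<D>. D \<subseteq> U \<and> infinite (D \<inter> S)))"
    by blast
qed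

text \<open>Only the first coordinate of the index is used, so \<open>(D)\<close> holds already with \<open>k = 1\<close>.\<close>

lemma G_base_if_countable_nhds_base_at_0:
  assumes "countable_nhds_base_at (0::'a::topological_group_add)"
  shows "\<exists>U :: (nat \<Rightarrow> nat) \<Rightarrow> 'a set. G_base U \<and> condition_D U"
proof -
  obtain A :: "nat \<Rightarrow> 'a set" where A: "\<And>n. open (A n)" "\<And>n. 0 \<in> A n" "decseq A"
    "\<And>W. nhd_of 0 W \<Longrightarrow> \<exists>n. A n \<subseteq> W"
    using countable_nhds_base_at_decseqE[OF assms] by blast
  define U where "U \<alpha> = A (\<alpha> 0)" for \<alpha> :: "nat \<Rightarrow> nat"
  have "G_base U"
    unfolding G_base_def
  proof (intro conjI allI impI)
    show "nhd_of 0 (U \<alpha>)" for \<alpha>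
      unfolding U_def using A(1,2) by (rule nhd_ofI)
    show "\<exists>\<alpha>. U \<alpha> \<subseteq> W" if "nhd_of 0 W" for W
      using A(4)[OF that] unfolding U_def by auto
    show "U \<beta> \<subseteq> U \<alpha>" if "\<alpha> \<le> \<beta>" for \<alpha> \<beta> :: "nat \<Rightarrow> nat"
      unfolding U_def using A(3) that by (simp add: decseq_def le_fun_def)
  qed
  moreover have "condition_D U"
    unfolding condition_D_def
  proof
    fix \<alpha> :: "nat \<Rightarrow> nat"
    have "U \<alpha> \<subseteq> D_k U 1 \<alpha>"
      unfolding D_k_def I_k_def U_def by auto
    moreover have "D_k U k \<alpha> \<subseteq> U \<alpha>" for k
      unfolding D_k_def I_k_def by blast
    ultimately show "U \<alpha> = (\<Union>k. D_k U k \<alpha>)"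
      by blast
  qed
  ultimately show ?thesis
    by blast
qed

section \<open>Baire spaces\<close>

lemma Baire_space_dense_complement:
  assumes "Baire_space TYPE('a::topological_space)" "countable \<C>"
    and nowhere_dense: "\<And>C. C \<in> \<C> \<Longrightarrow> interior (closure C) = {}"
  shows "closure (- \<Union>\<C>) = (UNIV :: 'a set)"
proof -
  have "countable ((\<lambda>C. - closure C) ` \<C>)"
    using assms(2) by simp
  moreover have "open G \<and> closure G = UNIV" if "G \<in> (\<lambda>C. - closure C) ` \<C>" for G
    using that nowhere_dense by (auto simp: closure_complement)
  ultimately have "closure (\<Inter>((\<lambda>C. - closure C) ` \<C>)) = (UNIV :: 'a set)"
    using assms(1) unfolding Baire_space_def by blast
  moreover have "\<Inter>((\<lambda>C. - closure C) ` \<C>) \<subseteq> - \<Union>\<C>"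
    using closure_subset by blast
  ultimately show ?thesis
    using closure_mono by blast
qed

lemma Baire_space_somewhere_dense:
  assumes "Baire_space TYPE('a::topological_space)" "countable \<C>"
    and "open S" "S \<noteq> {}" "S \<subseteq> \<Union>\<C>"
  shows "\<exists>C\<in>\<C>. interior (closure C) \<noteq> ({} :: 'a set)"
proof (rule ccontr)
  assume "\<not> ?thesis"
  then have "closure (- \<Union>\<C>) = UNIV"
    using Baire_space_dense_complement assms(1,2) by blast
  then have "S \<inter> - \<Union>\<C> \<noteq> {}"
    using open_Int_closure_eq_empty[of S "- \<Union>\<C>"] assms(3,4) by auto
  then show False
    using assms(5) by blast
qed

lemma in_closure_Diff_if_dense:
  fixes x :: "'a::t1_space"
  assumes "closure S = UNIV" "\<not> open {x}"
  shows "x \<in> closure (S - {x})"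
proof -
  have "\<exists>y\<in>S. y \<in> T \<and> y \<noteq> x" if T: "x \<in> T" "open T" for T
  proof -
    have "T - {x} \<noteq> {}"
    proof
      assume "T - {x} = {}"
      then have "T = {x}"
        using T(1) by blast
      then show False
        using T(2) assms(2) by simp
    qed
    then have "(T - {x}) \<inter> closure S \<noteq> {}"
      using assms(1) by simp
    moreover have "open (T - {x})"
      using T(2) by (simp add: open_Diff)
    ultimately have "(T - {x}) \<inter> S \<noteq> {}"
      using open_Int_closure_eq_empty by blast
    then show ?thesis
      by blast
  qed
  then have "x islimpt S"
    unfolding islimpt_def by blast
  then show ?thesis
    by (simp add: islimpt_in_closure)
qed

lemma Baire_space_in_closure_outside_nowhere_dense:
  fixes x :: "'a::t1_space"
  assumes "Baire_space TYPE('a)" "countable \<C>"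
    and "\<And>C. C \<in> \<C> \<Longrightarrow> interior (closure C) = {}" "\<not> open {x}"
  shows "x \<in> closure (- \<Union>\<C> - {x})"
  using in_closure_Diff_if_dense[OF Baire_space_dense_complement[OF assms(1-3)] assms(4)] .

section \<open>A countable base at zero in Baire groups\<close>

text \<open>For \<open>C \<subseteq> V\<close> and \<open>q \<in> interior (closure C)\<close>, the translate \<open>-q + interior (closure C)\<close> is
  an open neighbourhood of \<open>0\<close> inside \<open>- closure V + closure V\<close>.\<close>

lemma countable_nhds_base_at_0_if_somewhere_dense:
  fixes \<C> :: "'a::topological_group_add set set"
  assumes "countable \<C>"
    and somewhere_dense: "\<And>W. nhd_of 0 W \<Longrightarrow> \<exists>C\<in>\<C>. C \<subseteq> W \<and> interior (closure C) \<noteq> {}"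
  shows "countable_nhds_base_at (0::'a)"
proof -
  define p where "p C = (SOME q. q \<in> interior (closure C))" for C :: "'a set"
  have p: "p C \<in> interior (closure C)" if "interior (closure C) \<noteq> {}" for C
    unfolding p_def using that some_in_eq by blast
  define base where "base C = (+) (- p C) ` interior (closure C)" for C
  show ?thesis
  proof (rule countable_nhds_base_atI[of "base ` {C\<in>\<C>. interior (closure C) \<noteq> {}}"])
    show "countable (base ` {C\<in>\<C>. interior (closure C) \<noteq> {}})"
      using assms(1) by simp
    show "open B \<and> 0 \<in> B" if B: "B \<in> base ` {C\<in>\<C>. interior (closure C) \<noteq> {}}" for B
    proof -
      obtain C where C: "interior (closure C) \<noteq> {}" "B = base C"
        using B by blast
      have "open B"
        unfolding C(2) base_def by (simp add: open_translation_group)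
      moreover have "- p C + p C \<in> B"
        unfolding C(2) base_def using p[OF C(1)] by (rule imageI)
      ultimately show ?thesis
        by simp
    qed
    show "\<exists>B\<in>base ` {C\<in>\<C>. interior (closure C) \<noteq> {}}. B \<subseteq> W" if W: "nhd_of 0 W" for W
    proof -
      obtain O' where O': "open O'" "0 \<in> O'" "O' \<subseteq> W"
        using W unfolding nhd_of_def by blast
      obtain V where V: "open V" "0 \<in> V" "\<And>p q. p \<in> closure V \<Longrightarrow> q \<in> closure V \<Longrightarrow> -p + q \<in> O'"
        using nhds_0_closure_differences[OF O'(1,2)] by blast
      obtain C where C: "C \<in> \<C>" "C \<subseteq> V" "interior (closure C) \<noteq> {}"
        using somewhere_dense[OF nhd_ofI[OF V(1,2)]] by blast
      have closure_C: "interior (closure C) \<subseteq> closure V"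
        using C(2) interior_subset closure_mono by blast
      have "base C \<subseteq> O'"
      proof
        fix y
        assume "y \<in> base C"
        then obtain q where q: "q \<in> interior (closure C)" "y = - p C + q"
          unfolding base_def by blast
        have "- p C + q \<in> O'"
          using V(3) p[OF C(3)] q(1) closure_C by blast
        then show "y \<in> O'"
          using q(2) by simp
      qed
      then show ?thesis
        using C O'(3) by blast
    qed
  qed
qed

lemma countable_nhds_base_at_0_if_Baire_cover:
  fixes \<C> :: "'a::topological_group_add set set"
  assumes "Baire_space TYPE('a)" "countable \<C>"
    and cover: "\<And>W. nhd_of 0 W \<Longrightarrow> nhd_of 0 (\<Union>{C\<in>\<C>. C \<subseteq> W})"
  shows "countable_nhds_base_at (0::'a)"
proof (rule countable_nhds_base_at_0_if_somewhere_dense[OF assms(2)])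
  fix W :: "'a set"
  assume "nhd_of 0 W"
  then have "nhd_of 0 (\<Union>{C\<in>\<C>. C \<subseteq> W})"
    by (rule cover)
  then obtain S where S: "open S" "0 \<in> S" "S \<subseteq> \<Union>{C\<in>\<C>. C \<subseteq> W}"
    unfolding nhd_of_def by blast
  have "countable {C\<in>\<C>. C \<subseteq> W}"
    using assms(2) by simp
  then obtain C where "C \<in> {C\<in>\<C>. C \<subseteq> W}" "interior (closure C) \<noteq> {}"
    using Baire_space_somewhere_dense[OF assms(1) _ S(1) _ S(3)] S(2) by blast
  then show "\<exists>C\<in>\<C>. C \<subseteq> W \<and> interior (closure C) \<noteq> {}"
    by blast
qed

lemma countable_nhds_base_at_0_if_countable_cn_character:
  assumes "Baire_space TYPE('a::topological_group_add)" "countable_cn_character TYPE('a)"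
  shows "countable_nhds_base_at (0::'a)"
proof -
  obtain \<N> :: "'a set set" where \<N>: "countable \<N>" "cn_network_at 0 \<N>"
    using assms(2) unfolding countable_cn_character_def by blast
  show ?thesis
  proof (rule countable_nhds_base_at_0_if_Baire_cover[OF assms(1) \<N>(1)])
    fix W :: "'a set"
    assume "nhd_of 0 W"
    then have "nhd_of 0 (\<Union>{N\<in>\<N>. 0 \<in> N \<and> N \<subseteq> W})"
      using \<N>(2) unfolding cn_network_at_def by blast
    then show "nhd_of 0 (\<Union>{N\<in>\<N>. N \<subseteq> W})"
      by (rule nhd_of_mono) blast
  qed
qed

lemma countable_nhds_base_at_0_if_countable_ck_character:
  assumes "Baire_space TYPE('a::topological_group_add)" "countable_ck_character TYPE('a)"
  shows "countable_nhds_base_at (0::'a)"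
proof -
  obtain \<N> :: "'a set set" where \<N>: "countable \<N>" "ck_network_at 0 \<N>"
    using assms(2) unfolding countable_ck_character_def by blast
  show ?thesis
  proof (rule countable_nhds_base_at_0_if_Baire_cover[OF assms(1) \<N>(1)])
    fix W :: "'a set"
    assume "nhd_of 0 W"
    then obtain U where U: "nhd_of 0 U" "\<forall>K. compact K \<and> K \<subseteq> U \<longrightarrow>
        (\<exists>\<F>. finite \<F> \<and> \<F> \<subseteq> \<N> \<and> 0 \<in> \<Inter>\<F> \<and> K \<subseteq> \<Union>\<F> \<and> \<Union>\<F> \<subseteq> W)"
      using \<N>(2) unfolding ck_network_at_def by blast
    have "U \<subseteq> \<Union>{N\<in>\<N>. N \<subseteq> W}"
    proof
      fix y assume "y \<in> U"
      then obtain \<F> where "\<F> \<subseteq> \<N>" "y \<in> \<Union>\<F>" "\<Union>\<F> \<subseteq> W"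
        using U(2) by (auto dest!: spec[of _ "{y}"])
      then show "y \<in> \<Union>{N\<in>\<N>. N \<subseteq> W}"
        by blast
    qed
    then show "nhd_of 0 (\<Union>{N\<in>\<N>. N \<subseteq> W})"
      using U(1) by (rule nhd_of_mono[rotated])
  qed
qed

lemma countable_D_k: "countable (range (\<lambda>(k, \<alpha>). D_k U k \<alpha>))"
proof (rule countable_subset)
  let ?prefix = "\<lambda>xs :: nat list. \<lambda>i. if i < length xs then xs ! i else 0"
  show "range (\<lambda>(k, \<alpha>). D_k U k \<alpha>) \<subseteq> range (\<lambda>(k, xs). D_k U k (?prefix xs))"
  proof clarify
    fix k \<alpha>
    have "I_k k \<alpha> = I_k k (?prefix (map \<alpha> [0..<k]))"
      unfolding I_k_def by simp
    then have "D_k U k \<alpha> = D_k U k (?prefix (map \<alpha> [0..<k]))"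
      unfolding D_k_def by simp
    then show "D_k U k \<alpha> \<in> range (\<lambda>(k, xs). D_k U k (?prefix xs))"
      by (intro image_eqI[of _ _ "(k, map \<alpha> [0..<k])"]) simp_all
  qed
qed simp

lemma countable_nhds_base_at_0_if_G_base:
  fixes U :: "(nat \<Rightarrow> nat) \<Rightarrow> 'a::topological_group_add set"
  assumes "Baire_space TYPE('a)" "G_base U" "condition_D U"
  shows "countable_nhds_base_at (0::'a)"
proof (rule countable_nhds_base_at_0_if_Baire_cover[OF assms(1) countable_D_k])
  have nhds: "\<forall>\<alpha>. nhd_of 0 (U \<alpha>)" and base: "\<forall>V. nhd_of 0 V \<longrightarrow> (\<exists>\<alpha>. U \<alpha> \<subseteq> V)"
    using assms(2) unfolding G_base_def by simp_all
  fix W :: "'a set"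
  assume "nhd_of 0 W"
  then obtain \<alpha> where \<alpha>: "U \<alpha> \<subseteq> W"
    using base by blast
  have "U \<alpha> \<subseteq> \<Union>{C \<in> range (\<lambda>(k, \<alpha>). D_k U k \<alpha>). C \<subseteq> W}"
  proof
    fix y
    assume "y \<in> U \<alpha>"
    moreover have "U \<alpha> = (\<Union>k. D_k U k \<alpha>)"
      using assms(3) unfolding condition_D_def by simp
    ultimately obtain k where k: "y \<in> D_k U k \<alpha>"
      by auto
    have "D_k U k \<alpha> \<subseteq> U \<alpha>"
      unfolding D_k_def I_k_def by blast
    moreover have "D_k U k \<alpha> \<in> range (\<lambda>(k, \<alpha>). D_k U k \<alpha>)"
      by (rule image_eqI[of _ _ "(k, \<alpha>)"]) simp_all
    ultimately have "D_k U k \<alpha> \<in> {C \<in> range (\<lambda>(k, \<alpha>). D_k U k \<alpha>). C \<subseteq> W}"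
      using \<alpha> by (intro CollectI conjI) auto
    then show "y \<in> \<Union>{C \<in> range (\<lambda>(k, \<alpha>). D_k U k \<alpha>). C \<subseteq> W}"
      using k by (rule UnionI)
  qed
  moreover have "nhd_of 0 (U \<alpha>)"
    using nhds by simp
  ultimately show "nhd_of 0 (\<Union>{C \<in> range (\<lambda>(k, \<alpha>). D_k U k \<alpha>). C \<subseteq> W})"
    by (rule nhd_of_mono[rotated])
qed

text \<open>If \<open>{0}\<close> is open the group is discrete. Otherwise, should no member of \<open>\<D>\<close> inside \<open>W\<close>
  be somewhere dense, the points outside all of them accumulate at \<open>0\<close>, contradicting the
  strong Pytkeev property.\<close>

lemma countable_nhds_base_at_0_if_strong_Pytkeev:
  assumes "Baire_space TYPE('a::{topological_group_add, t1_space})" "strong_Pytkeev TYPE('a)"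
  shows "countable_nhds_base_at (0::'a)"
proof -
  obtain \<D> :: "'a set set" where \<D>: "countable \<D>"
    "\<forall>U S. nhd_of 0 U \<and> 0 \<in> closure S - S \<longrightarrow> (\<exists>D\<in>\<D>. D \<subseteq> U \<and> infinite (D \<inter> S))"
    using assms(2) unfolding strong_Pytkeev_def by (elim allE[of _ "0::'a"] exE conjE)
  show ?thesis
  proof (rule countable_nhds_base_at_0_if_somewhere_dense[of "insert {0} \<D>"])
    show "countable (insert {0} \<D>)"
      using \<D>(1) by simp
    fix W :: "'a set"
    assume W: "nhd_of 0 W"
    show "\<exists>C\<in>insert {0} \<D>. C \<subseteq> W \<and> interior (closure C) \<noteq> {}"
    proof (cases "open {0::'a}")
      case True
      then have "0 \<in> interior (closure {0::'a})"
        by (simp add: interior_open)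
      moreover have "{0} \<subseteq> W"
        using W unfolding nhd_of_def by blast
      ultimately show ?thesis
        by blast
    next
      case False
      show ?thesis
      proof (rule ccontr)
        assume "\<not> ?thesis"
        then have nowhere_dense: "interior (closure D) = {}" if "D \<in> {D\<in>\<D>. D \<subseteq> W}" for D
          using that by blast
        have "countable {D\<in>\<D>. D \<subseteq> W}"
          using \<D>(1) by simp
        define S where "S = - \<Union>{D\<in>\<D>. D \<subseteq> W} - {0}"
        have "0 \<in> closure S"
          unfolding S_def
          by (rule Baire_space_in_closure_outside_nowhere_dense[OF assms(1) _ nowhere_dense False]) fact
        moreover have "0 \<notin> S"
          unfolding S_def by blast
        ultimately obtain D where "D \<in> \<D>" "D \<subseteq> W" "infinite (D \<inter> S)"
          using \<D>(2) W by blast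
        moreover have "D \<inter> S = {}"
          unfolding S_def using calculation(1,2) by blast
        ultimately show False
          by simp
      qed
    qed
  qed
qed

section \<open>The Birkhoff--Kakutani metrization theorem\<close>

lemma sum_list_split_halves:
  fixes w :: "'b \<Rightarrow> real"
  assumes "zs \<noteq> []" and nonneg: "\<And>z. 0 \<le> w z"
  obtains as c bs where "zs = as @ c # bs"
    "sum_list (map w as) \<le> sum_list (map w zs) / 2" "sum_list (map w bs) \<le> sum_list (map w zs) / 2"
proof -
  define S where "S = sum_list (map w zs)"
  have sum_nonneg: "0 \<le> sum_list (map w xs)" for xs
    by (rule sum_list_nonneg) (auto simp: nonneg)
  define P where "P j \<longleftrightarrow> j < length zs \<and> sum_list (map w (take j zs)) \<le> S / 2" for j
  have "P 0"
    unfolding P_def S_def using assms(1) sum_nonneg[of zs] by simp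
  moreover have bound: "j \<le> length zs" if "P j" for j
    using that unfolding P_def by simp
  ultimately have PJ: "P (Greatest P)"
    by (rule GreatestI_nat)
  have J_max: "j \<le> Greatest P" if "P j" for j
    using that bound by (rule Greatest_le_nat)
  define J where "J = Greatest P"
  have J: "J < length zs" "sum_list (map w (take J zs)) \<le> S / 2"
    using PJ unfolding P_def J_def by simp_all
  define as c bs where "as = take J zs" and "c = zs ! J" and "bs = drop (Suc J) zs"
  have zs: "zs = as @ c # bs"
    unfolding as_def c_def bs_def using J(1) by (rule id_take_nth_drop)
  then have S: "S = sum_list (map w as) + w c + sum_list (map w bs)"
    unfolding S_def by (simp add: add.assoc)
  have "sum_list (map w bs) \<le> S / 2"
  proof (cases "Suc J < length zs")
    case True
    then have "\<not> P (Suc J)"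
      using J_max unfolding J_def by fastforce
    then have "S / 2 < sum_list (map w (take (Suc J) zs))"
      using True unfolding P_def by simp
    also have "take (Suc J) zs = as @ [c]"
      unfolding as_def c_def using J(1) by (rule take_Suc_conv_app_nth)
    finally show ?thesis
      using S by simp
  next
    case False
    then have "bs = []"
      unfolding bs_def by simp
    then show ?thesis
      using sum_nonneg[of zs] unfolding S_def by simp
  qed
  then show thesis
    using that zs J(2) unfolding as_def S_def by blast
qed

lemma sum_list_rev_map_uminus:
  fixes zs :: "'a::group_add list"
  shows "sum_list (rev (map uminus zs)) = - sum_list zs"
  by (induction zs) (simp_all add: minus_add)

locale Birkhoff_Kakutani =
  fixes V :: "nat \<Rightarrow> 'a::{topological_group_add, t1_space} set"
  assumes V_0: "V 0 = UNIV"
    and open_V: "open (V n)"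
    and zero_in_V: "0 \<in> V n"
    and uminus_in_V: "x \<in> V n \<Longrightarrow> -x \<in> V n"
    and add3_in_V: "x \<in> V (Suc n) \<Longrightarrow> y \<in> V (Suc n) \<Longrightarrow> z \<in> V (Suc n) \<Longrightarrow> x + y + z \<in> V n"
    and nhds_V: "nhd_of 0 W \<Longrightarrow> \<exists>n. V n \<subseteq> W"
begin

lemma V_Suc_subset: "V (Suc n) \<subseteq> V n"
proof
  fix x
  assume "x \<in> V (Suc n)"
  then have "x + 0 + 0 \<in> V n"
    using add3_in_V zero_in_V by blast
  then show "x \<in> V n"
    by simp
qed

lemma V_antimono: "m \<le> n \<Longrightarrow> V n \<subseteq> V m"
  using lift_Suc_antimono_le[of V, OF V_Suc_subset] .

lemma uminus_in_V_iff: "-x \<in> V n \<longleftrightarrow> x \<in> V n"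
  using uminus_in_V[of x n] uminus_in_V[of "-x" n] by auto

lemma eq_0_if_in_all_V:
  assumes "\<forall>n. z \<in> V n"
  shows "z = 0"
proof (rule ccontr)
  assume "z \<noteq> 0"
  then obtain T where "open T" "0 \<in> T" "z \<notin> T"
    using t1_space[of 0 z] by blast
  then obtain n where "V n \<subseteq> T"
    using nhds_V[OF nhd_ofI] by blast
  then show False
    using assms \<open>z \<notin> T\<close> by blast
qed

text \<open>\<open>level z\<close> is the largest \<open>k\<close> with \<open>z \<in> V k\<close>, so \<open>weight z\<close> is \<open>2\<^sup>-\<^sup>k\<close>, or \<open>0\<close> if there is
  no largest one.\<close>

definition level :: "'a \<Rightarrow> nat" where
  "level z = (LEAST n. z \<notin> V (Suc n))"

definition weight :: "'a \<Rightarrow> real" where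
  "weight z = (if \<forall>n. z \<in> V n then 0 else (1/2) ^ level z)"

lemma in_V_iff_le_level:
  assumes "\<not> (\<forall>n. z \<in> V n)"
  shows "z \<in> V q \<longleftrightarrow> q \<le> level z"
proof -
  obtain n where n: "z \<notin> V n"
    using assms by blast
  then obtain m where "n = Suc m"
    using V_0 by (cases n) auto
  then have not_in: "z \<notin> V (Suc (level z))"
    using n unfolding level_def by (intro LeastI[of "\<lambda>m. z \<notin> V (Suc m)" m]) simp
  have in_V: "z \<in> V (Suc m)" if "m < level z" for m
    using not_less_Least[of m "\<lambda>m. z \<notin> V (Suc m)"] that unfolding level_def by simp
  show ?thesis
  proof
    assume "z \<in> V q"
    show "q \<le> level z"
    proof (rule ccontr)
      assume "\<not> q \<le> level z"
      then have "V q \<subseteq> V (Suc (level z))"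
        by (intro V_antimono) simp
      then show False
        using \<open>z \<in> V q\<close> not_in by blast
    qed
  next
    assume "q \<le> level z"
    then show "z \<in> V q"
      using in_V V_0 by (cases q) auto
  qed
qed

lemma weight_le_iff: "weight z \<le> (1/2) ^ q \<longleftrightarrow> z \<in> V q"
proof (cases "\<forall>n. z \<in> V n")
  case False
  then have "weight z = (1/2) ^ level z"
    unfolding weight_def by (rule if_not_P)
  then have "weight z \<le> (1/2) ^ q \<longleftrightarrow> q \<le> level z"
    by (simp add: power_decreasing_iff)
  then show ?thesis
    using in_V_iff_le_level[OF False] by simp
qed (simp add: weight_def)

lemma weight_nonneg: "0 \<le> weight z"
  unfolding weight_def by simp

lemma weight_0: "weight 0 = 0"
  unfolding weight_def using zero_in_V by simp

lemma weight_uminus: "weight (-z) = weight z"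
  unfolding weight_def level_def by (simp add: uminus_in_V_iff)

lemma weight_cases: "weight z = 0 \<or> (\<exists>q. weight z = (1/2) ^ q)"
  unfolding weight_def by auto

lemma weight_eq_0_iff: "weight z = 0 \<longleftrightarrow> (\<forall>n. z \<in> V n)"
  unfolding weight_def by simp

lemma weight_add3: "weight (x + y + z) \<le> 2 * max (weight x) (max (weight y) (weight z))"
proof -
  define m where "m = max (weight x) (max (weight y) (weight z))"
  have le_m: "weight x \<le> m" "weight y \<le> m" "weight z \<le> m"
    unfolding m_def by simp_all
  have "m = weight x \<or> m = weight y \<or> m = weight z"
    unfolding m_def by linarith
  then have "m = 0 \<or> (\<exists>q. m = (1/2) ^ q)"
    by (elim disjE) (metis weight_cases)+
  then consider "m = 0" | q where "m = (1/2) ^ q"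
    by blast
  then have "weight (x + y + z) \<le> 2 * m"
  proof cases
    case 1
    then have "weight x = 0" "weight y = 0" "weight z = 0"
      using le_m weight_nonneg[of x] weight_nonneg[of y] weight_nonneg[of z] by linarith+
    then have "x \<in> V k" "y \<in> V k" "z \<in> V k" for k
      by (simp_all add: weight_eq_0_iff)
    then have "x + y + z \<in> V n" for n
      by (intro add3_in_V)
    then have "weight (x + y + z) = 0"
      by (simp add: weight_eq_0_iff)
    then show ?thesis
      using 1 by simp
  next
    case (2 q)
    then have xyz: "x \<in> V q" "y \<in> V q" "z \<in> V q"
      using le_m weight_le_iff by simp_all
    show ?thesis
    proof (cases q)
      case 0
      have "weight (x + y + z) \<le> (1/2) ^ 0"
        unfolding weight_le_iff V_0 by simp
      then show ?thesis
        using 2 0 by simp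
    next
      case (Suc p)
      then have "x + y + z \<in> V p"
        using xyz by (intro add3_in_V) simp_all
      then have "weight (x + y + z) \<le> (1/2) ^ p"
        by (simp add: weight_le_iff)
      then show ?thesis
        using 2 Suc by simp
    qed
  qed
  then show ?thesis
    unfolding m_def .
qed

lemma weight_sum_list: "weight (sum_list zs) \<le> 2 * sum_list (map weight zs)"
proof (induction "length zs" arbitrary: zs rule: less_induct)
  case less
  show ?case
  proof (cases "zs = []")
    case True
    then show ?thesis
      by (simp add: weight_0)
  next
    case False
    define S where "S = sum_list (map weight zs)"
    obtain as c bs where zs: "zs = as @ c # bs"
      and as: "sum_list (map weight as) \<le> S / 2" and bs: "sum_list (map weight bs) \<le> S / 2"
      unfolding S_def by (rule sum_list_split_halves[OF False weight_nonneg])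
    have "weight (sum_list as) \<le> S"
      using less.hyps[of as] as zs by simp
    moreover have "weight (sum_list bs) \<le> S"
      using less.hyps[of bs] bs zs by simp
    moreover have "weight c \<le> S"
    proof -
      have "0 \<le> sum_list (map weight as)" "0 \<le> sum_list (map weight bs)"
        by (rule sum_list_nonneg; auto simp: weight_nonneg)+
      moreover have "S = sum_list (map weight as) + weight c + sum_list (map weight bs)"
        unfolding S_def zs by simp
      ultimately show ?thesis
        by linarith
    qed
    ultimately have "max (weight (sum_list as)) (max (weight c) (weight (sum_list bs))) \<le> S"
      by simp
    then have "weight (sum_list as + c + sum_list bs) \<le> 2 * S"
      using weight_add3[of "sum_list as" c "sum_list bs"] by linarith
    then show ?thesis
      unfolding S_def zs by (simp add: add.assoc)
  qed
qed

text \<open>The weight itself need not be subadditive; taking the infimum over all factorizations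
  repairs this, and \<open>weight_sum_list\<close> keeps the result comparable with the weight.\<close>

definition group_norm :: "'a \<Rightarrow> real" where
  "group_norm z = Inf {sum_list (map weight zs) | zs. sum_list zs = z}"

lemma group_norm_le: "sum_list zs = z \<Longrightarrow> group_norm z \<le> sum_list (map weight zs)"
  unfolding group_norm_def
proof (rule cInf_lower)
  show "bdd_below {sum_list (map weight zs) | zs. sum_list zs = z}"
    by (rule bdd_belowI[of _ 0]) (force intro!: sum_list_nonneg simp: weight_nonneg)
qed blast

lemma group_norm_ge:
  assumes "\<And>zs. sum_list zs = z \<Longrightarrow> c \<le> sum_list (map weight zs)"
  shows "c \<le> group_norm z"
  unfolding group_norm_def
proof (rule cInf_greatest)
  have "sum_list [z] = z"
    by simp
  then show "{sum_list (map weight zs) | zs. sum_list zs = z} \<noteq> {}"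
    by blast
qed (use assms in blast)

lemma group_norm_le_weight: "group_norm z \<le> weight z"
  using group_norm_le[of "[z]" z] by simp

lemma weight_le_group_norm: "weight z \<le> 2 * group_norm z"
proof -
  have "weight z / 2 \<le> group_norm z"
  proof (rule group_norm_ge)
    fix zs
    assume "sum_list zs = z"
    then show "weight z / 2 \<le> sum_list (map weight zs)"
      using weight_sum_list[of zs] by simp
  qed
  then show ?thesis
    by simp
qed

lemma group_norm_nonneg: "0 \<le> group_norm z"
  by (rule group_norm_ge) (rule sum_list_nonneg, auto simp: weight_nonneg)

lemma group_norm_add: "group_norm (x + y) \<le> group_norm x + group_norm y"
proof -
  have "group_norm (x + y) - group_norm y \<le> group_norm x"
  proof (rule group_norm_ge)
    fix xs
    assume xs: "sum_list xs = x"
    have "group_norm (x + y) - sum_list (map weight xs) \<le> group_norm y"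
    proof (rule group_norm_ge)
      fix ys
      assume "sum_list ys = y"
      then have "group_norm (x + y) \<le> sum_list (map weight (xs @ ys))"
        using xs by (intro group_norm_le) simp
      then show "group_norm (x + y) - sum_list (map weight xs) \<le> sum_list (map weight ys)"
        by simp
    qed
    then show "group_norm (x + y) - group_norm y \<le> sum_list (map weight xs)"
      by simp
  qed
  then show ?thesis
    by simp
qed

lemma group_norm_uminus_le: "group_norm (-z) \<le> group_norm z"
proof (rule group_norm_ge)
  fix zs
  assume zs: "sum_list zs = z"
  have "group_norm (-z) \<le> sum_list (map weight (rev (map uminus zs)))"
    by (rule group_norm_le) (simp add: sum_list_rev_map_uminus zs)
  also have "\<dots> = sum_list (map weight zs)"
    by (simp add: rev_map[symmetric] sum_list_rev weight_uminus comp_def)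
  finally show "group_norm (-z) \<le> sum_list (map weight zs)" .
qed

lemma group_norm_uminus: "group_norm (-z) = group_norm z"
  using group_norm_uminus_le[of z] group_norm_uminus_le[of "-z"] by simp

definition group_dist :: "'a \<Rightarrow> 'a \<Rightarrow> real" where
  "group_dist x y = group_norm (-x + y)"

lemma Metric_space_group_dist: "Metric_space UNIV group_dist"
  unfolding Metric_space_def
proof (intro conjI allI impI)
  fix x y z :: 'a
  show "0 \<le> group_dist x y"
    unfolding group_dist_def by (rule group_norm_nonneg)
  have "- y + x = - (- x + y)"
    by (simp add: minus_add)
  then show "group_dist x y = group_dist y x"
    unfolding group_dist_def using group_norm_uminus by metis
  show "group_dist x y = 0 \<longleftrightarrow> x = y"
  proof
    assume "group_dist x y = 0"
    then have "weight (-x + y) \<le> (1/2) ^ n" for n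
      using weight_le_group_norm[of "-x + y"] unfolding group_dist_def
      by (metis mult_zero_right order_trans zero_le_power zero_le_divide_1_iff zero_le_numeral)
    then have "-x + y = 0"
      using eq_0_if_in_all_V weight_le_iff by blast
    then show "x = y"
      by (metis add_minus_cancel add.right_neutral)
  next
    assume "x = y"
    then show "group_dist x y = 0"
      unfolding group_dist_def using group_norm_le_weight[of 0] group_norm_nonneg[of 0] weight_0
      by simp
  qed
  have "- x + z = (- x + y) + (- y + z)"
    by (simp add: add.assoc[symmetric])
  then show "group_dist x z \<le> group_dist x y + group_dist y z"
    unfolding group_dist_def using group_norm_add[of "- x + y" "- y + z"] by metis
qed

lemma group_dist_less_if_in_V: "-x + y \<in> V (Suc n) \<Longrightarrow> group_dist x y < (1/2) ^ n"
proof -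
  assume "-x + y \<in> V (Suc n)"
  then have "weight (-x + y) \<le> (1/2) ^ Suc n"
    using weight_le_iff by blast
  then have "group_dist x y \<le> (1/2) ^ Suc n"
    unfolding group_dist_def using group_norm_le_weight[of "-x + y"] by linarith
  moreover have "(1/2::real) ^ Suc n < (1/2) ^ n"
    by simp
  ultimately show ?thesis
    by linarith
qed

lemma in_V_if_group_dist_less: "group_dist x y < (1/2) ^ Suc n \<Longrightarrow> -x + y \<in> V n"
proof -
  assume "group_dist x y < (1/2) ^ Suc n"
  then have "weight (-x + y) < (1/2) ^ n"
    using weight_le_group_norm[of "-x + y"] unfolding group_dist_def by simp
  then show ?thesis
    by (simp add: weight_le_iff[symmetric])
qed

lemma translate_V_subset_iff_mball_subset:
  "(\<exists>n. (+) x ` V n \<subseteq> S) \<longleftrightarrow> (\<exists>r>0. Metric_space.mball UNIV group_dist x r \<subseteq> S)"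
proof
  assume "\<exists>n. (+) x ` V n \<subseteq> S"
  then obtain n where n: "(+) x ` V n \<subseteq> S"
    by blast
  have "Metric_space.mball UNIV group_dist x ((1/2) ^ Suc n) \<subseteq> (+) x ` V n"
  proof
    fix y
    assume "y \<in> Metric_space.mball UNIV group_dist x ((1/2) ^ Suc n)"
    then have "-x + y \<in> V n"
      using Metric_space.in_mball[OF Metric_space_group_dist] in_V_if_group_dist_less by blast
    moreover have "y = x + (-x + y)"
      by (simp add: add.assoc[symmetric])
    ultimately show "y \<in> (+) x ` V n"
      by (rule rev_image_eqI)
  qed
  then show "\<exists>r>0. Metric_space.mball UNIV group_dist x r \<subseteq> S"
    using n by (intro exI[of _ "(1/2) ^ Suc n"]) auto
next
  assume "\<exists>r>0. Metric_space.mball UNIV group_dist x r \<subseteq> S"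
  then obtain r where r: "r > 0" "Metric_space.mball UNIV group_dist x r \<subseteq> S"
    by blast
  obtain n where n: "(1/2::real) ^ n < r"
    using real_arch_pow_inv[OF r(1), of "1/2"] by auto
  have "(+) x ` V (Suc n) \<subseteq> Metric_space.mball UNIV group_dist x r"
  proof
    fix y
    assume "y \<in> (+) x ` V (Suc n)"
    then obtain v where "v \<in> V (Suc n)" "y = x + v"
      by blast
    then have "group_dist x y < (1/2) ^ n"
      by (intro group_dist_less_if_in_V) (simp add: add.assoc[symmetric])
    then show "y \<in> Metric_space.mball UNIV group_dist x r"
      using n Metric_space.in_mball[OF Metric_space_group_dist] by simp
  qed
  then show "\<exists>n. (+) x ` V n \<subseteq> S"
    using r(2) by blast
qed

lemma open_iff_translates_V: "open S \<longleftrightarrow> (\<forall>x\<in>S. \<exists>n. (+) x ` V n \<subseteq> S)"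
proof
  assume S: "open S"
  show "\<forall>x\<in>S. \<exists>n. (+) x ` V n \<subseteq> S"
  proof
    fix x
    assume "x \<in> S"
    then have "-x + x \<in> (+) (-x) ` S"
      by (rule imageI)
    then have "nhd_of 0 ((+) (-x) ` S)"
      using S by (intro nhd_ofI open_translation_group) simp_all
    then obtain n where "V n \<subseteq> (+) (-x) ` S"
      using nhds_V by blast
    then have "(+) x ` V n \<subseteq> (+) x ` (+) (-x) ` S"
      by (rule image_mono)
    also have "\<dots> = S"
      by (simp add: image_image add.assoc[symmetric])
    finally show "\<exists>n. (+) x ` V n \<subseteq> S"
      by blast
  qed
next
  assume translates: "\<forall>x\<in>S. \<exists>n. (+) x ` V n \<subseteq> S"
  show "open S"
  proof (rule open_subopen[THEN iffD2], intro ballI)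
    fix x
    assume "x \<in> S"
    then obtain n where n: "(+) x ` V n \<subseteq> S"
      using translates by blast
    have "x + 0 \<in> (+) x ` V n"
      using zero_in_V by (rule imageI)
    then show "\<exists>T. open T \<and> x \<in> T \<and> T \<subseteq> S"
      using n open_V open_translation_group by (intro exI[of _ "(+) x ` V n"]) auto
  qed
qed

lemma mtopology_group_dist: "Metric_space.mtopology UNIV group_dist = euclidean"
proof (rule topology_eq[THEN iffD2], intro allI)
  fix S :: "'a set"
  show "openin (Metric_space.mtopology UNIV group_dist) S \<longleftrightarrow> openin euclidean S"
    unfolding Metric_space.openin_mtopology[OF Metric_space_group_dist] open_openin[symmetric]
      open_iff_translates_V translate_V_subset_iff_mball_subset
    by (simp add: Ball_def)
qed

lemma metrizable: "metrizable_space (euclidean :: 'a topology)"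
  unfolding metrizable_space_def using Metric_space_group_dist mtopology_group_dist by metis

end

lemma Birkhoff_Kakutani_if_countable_nhds_base_at_0:
  assumes "countable_nhds_base_at (0::'a)"
  obtains V :: "nat \<Rightarrow> 'a::{topological_group_add, t1_space} set" where "Birkhoff_Kakutani V"
proof -
  obtain A :: "nat \<Rightarrow> 'a set" where A: "\<And>n. open (A n) \<and> 0 \<in> A n" "\<And>W. nhd_of 0 W \<Longrightarrow> \<exists>n. A n \<subseteq> W"
    using assms unfolding countable_nhds_base_at_def by blast
  define P where "P n V \<longleftrightarrow> open V \<and> 0 \<in> V \<and> (\<forall>x\<in>V. -x \<in> V) \<and> (n = 0 \<longrightarrow> V = UNIV)"
    for n :: nat and V :: "'a set"
  define Q where "Q n V V' \<longleftrightarrow> (\<forall>x\<in>V'. \<forall>y\<in>V'. \<forall>z\<in>V'. x + y + z \<in> V \<inter> A n)"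
    for n :: nat and V V' :: "'a set"
  have "\<exists>V'. P (Suc n) V' \<and> Q n V V'" if "P n V" for n V
  proof -
    have VA: "open (V \<inter> A n)" "0 \<in> V \<inter> A n"
      using that A(1) unfolding P_def by auto
    obtain V' where V': "open V'" "0 \<in> V'" "\<And>x. x \<in> V' \<Longrightarrow> -x \<in> V'"
      "\<And>a b c d. a \<in> V' \<Longrightarrow> b \<in> V' \<Longrightarrow> c \<in> V' \<Longrightarrow> d \<in> V' \<Longrightarrow> a + b + c + d \<in> V \<inter> A n"
      using symmetric_nhds_0_sum4[OF VA] by blast
    have "x + y + z \<in> V \<inter> A n" if "x \<in> V'" "y \<in> V'" "z \<in> V'" for x y z
      using V'(4)[of x y z 0] V'(2) that by simp
    then have "P (Suc n) V' \<and> Q n V V'"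
      using V'(1-3) unfolding P_def Q_def by simp
    then show ?thesis
      by blast
  qed
  moreover have "P 0 UNIV"
    unfolding P_def by simp
  ultimately obtain V where V: "\<And>n. P n (V n)" "\<And>n. Q n (V n) (V (Suc n))"
    using dependent_nat_choice[of P Q] by blast
  have "Birkhoff_Kakutani V"
  proof
    show "V 0 = UNIV" "open (V n)" "0 \<in> V n" for n
      using V(1) unfolding P_def by auto
    show "-x \<in> V n" if "x \<in> V n" for x n
      using V(1)[of n] that unfolding P_def by blast
    show "x + y + z \<in> V n" if "x \<in> V (Suc n)" "y \<in> V (Suc n)" "z \<in> V (Suc n)" for x y z n
      using V(2)[of n] that unfolding Q_def by blast
    show "\<exists>n. V n \<subseteq> W" if "nhd_of 0 W" for W
    proof -
      obtain n where "A n \<subseteq> W"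
        using A(2) \<open>nhd_of 0 W\<close> by blast
      moreover have "V (Suc n) \<subseteq> A n"
      proof
        fix x
        assume "x \<in> V (Suc n)"
        then have "x + 0 + 0 \<in> V n \<inter> A n"
          using V(1)[of "Suc n"] V(2)[of n] unfolding P_def Q_def by blast
        then show "x \<in> A n"
          by simp
      qed
      ultimately show ?thesis
        by blast
    qed
  qed
  then show thesis
    by (rule that)
qed

lemma metrizable_if_countable_nhds_base_at_0:
  assumes "countable_nhds_base_at (0::'a::{topological_group_add, t1_space})"
  shows "metrizable_space (euclidean :: 'a topology)"
proof -
  obtain V :: "nat \<Rightarrow> 'a set" where "Birkhoff_Kakutani V"
    using Birkhoff_Kakutani_if_countable_nhds_base_at_0[OF assms] .
  then interpret Birkhoff_Kakutani V .
  show ?thesis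
    by (rule metrizable)
qed

theorem mainTheorem4:
  assumes "Baire_space TYPE('a::{topological_group_add, t2_space})"
  shows "(metrizable_space (euclidean :: 'a topology) \<longleftrightarrow> strong_Pytkeev TYPE('a))
       \<and> (strong_Pytkeev TYPE('a) \<longleftrightarrow> countable_ck_character TYPE('a))
       \<and> (countable_ck_character TYPE('a) \<longleftrightarrow> countable_cn_character TYPE('a))
       \<and> (countable_cn_character TYPE('a) \<longleftrightarrow>
            (\<exists>U :: (nat \<Rightarrow> nat) \<Rightarrow> 'a set. G_base U \<and> condition_D U))"
proof -
  let ?base = "countable_nhds_base_at (0::'a)"
  have everywhere: "countable_nhds_base_at x" if ?base for x :: 'a
    using that by (rule countable_nhds_base_at_translation)
  have "metrizable_space (euclidean :: 'a topology) \<longleftrightarrow> ?base"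
    using countable_nhds_base_at_if_metrizable metrizable_if_countable_nhds_base_at_0 by blast
  moreover have "strong_Pytkeev TYPE('a) \<longleftrightarrow> ?base"
    using countable_nhds_base_at_0_if_strong_Pytkeev[OF assms]
      strong_Pytkeev_if_countable_nhds_bases everywhere by blast
  moreover have "countable_ck_character TYPE('a) \<longleftrightarrow> ?base"
    using countable_nhds_base_at_0_if_countable_ck_character[OF assms]
      countable_ck_character_if_countable_nhds_bases everywhere by blast
  moreover have "countable_cn_character TYPE('a) \<longleftrightarrow> ?base"
    using countable_nhds_base_at_0_if_countable_cn_character[OF assms]
      countable_cn_character_if_countable_nhds_bases everywhere by blast
  moreover have "(\<exists>U :: (nat \<Rightarrow> nat) \<Rightarrow> 'a set. G_base U \<and> condition_D U) \<longleftrightarrow> ?base"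
    using countable_nhds_base_at_0_if_G_base[OF assms] G_base_if_countable_nhds_base_at_0 by blast
  ultimately show ?thesis
    by blast
qed

end
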